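(* Let $\{\nu_n\}_{n\in\mathbb N}$ be probability measures on $\mathbb R^d$ with densities $\{p_n\}$. Suppose there are constants $\delta>0$, $c>0$, $N_0\in\mathbb N$ such that for all $n>N_0$: (1) $p_n$ has a unique maximizer $\hat\theta_n$; (2) $\nu_n(B_1(\hat\theta_n))>1/2$; (3) $p_n$ is positive and differentiable on $B_\delta(\hat\theta_n)$ and $$\sup_{\|\theta-\hat\theta_n\|\le\delta}\ \sup_{\|v\|=1}\frac{|\nabla_v p_n(\theta)|}{p_n(\theta)}\le n^c.$$ Let $\lambda_n$ be the density of the uniform distribution on $B_{n^{-c}}(\hat\theta_n)$. Then there is an absolute constant $C$ (not depending on $n,c,d$; one may take $C=2e$) such that for all $n>\max(N_0,\delta^{-1/c})$ and all $\theta\in B_{n^{-c}}(\hat\theta_n)$, $$\frac{\lambda_n(\theta)}{p_n(\theta)}\le C\,n^{cd}.$$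
   Context: $B_r(x)=\{y:\|x-y\|\le r\}$ is the closed Euclidean ball of radius $r$ about $x$; $\nabla_v$ denotes the directional derivative in direction $v$. *)

theory Defs
  imports "HOL-Probability.Probability"
begin

definition uniform_ball_density :: "'a::euclidean_space \<Rightarrow> real \<Rightarrow> 'a \<Rightarrow> real" where
  "uniform_ball_density z r x = indicator (cball z r) x / measure lborel (cball z r)"

end

theory Submission
  imports Defs
begin

text \<open>A bound on the logarithmic derivative of \<open>p\<^sub>n\<close> makes \<open>ln p\<^sub>n\<close> Lipschitz with constant
  \<open>n\<^sup>c\<close> on the ball \<open>B\<^sub>\<delta>(\<theta>\<^sub>n)\<close>, so \<open>p\<^sub>n\<close> drops by at most a factor \<open>e\<close> on the smaller ball
  \<open>B\<^sub>r(\<theta>\<^sub>n)\<close> with \<open>r = n\<^sup>-\<^sup>c\<close>. On the other hand \<open>1/2 < \<nu>\<^sub>n(B\<^sub>1(\<theta>\<^sub>n)) \<le> p\<^sub>n(\<theta>\<^sub>n) vol(B\<^sub>1)\<close>,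
  so \<open>p\<^sub>n \<ge> 1/(2e vol(B\<^sub>1))\<close> on \<open>B\<^sub>r(\<theta>\<^sub>n)\<close>, while the uniform density there is
  \<open>1/(vol(B\<^sub>1) r\<^sup>d) = n\<^sup>c\<^sup>d/vol(B\<^sub>1)\<close>.\<close>

lemma linear_norm_le_of_unit_bound:
  fixes D :: "'a::real_normed_vector \<Rightarrow> 'b::real_normed_vector"
  assumes "linear D" and unit: "\<And>u. norm u = 1 \<Longrightarrow> norm (D u) \<le> B"
  shows "norm (D v) \<le> B * norm v"
proof (cases "v = 0")
  case True
  then show ?thesis using linear_0[OF \<open>linear D\<close>] by simp
next
  case False
  define u where "u = v /\<^sub>R norm v"
  have "norm u = 1" "v = norm v *\<^sub>R u" using False by (simp_all add: u_def)
  then have "norm (D v) = norm v * norm (D u)"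
    by (metis linear_scale[OF \<open>linear D\<close>] norm_scaleR abs_norm_cancel)
  also have "\<dots> \<le> norm v * B" using unit[OF \<open>norm u = 1\<close>] by (simp add: mult_left_mono)
  finally show ?thesis by (simp add: mult.commute)
qed

lemma ln_lipschitz_of_log_derivative_bound:
  fixes f :: "'a::{real_normed_vector, perfect_space} \<Rightarrow> real"
  assumes "convex S"
    and pos: "\<And>x. x \<in> S \<Longrightarrow> f x > 0"
    and diff: "\<And>x. x \<in> S \<Longrightarrow> f differentiable (at x)"
    and bound: "\<And>x u. x \<in> S \<Longrightarrow> norm u = 1 \<Longrightarrow> \<bar>frechet_derivative f (at x) u\<bar> / f x \<le> L"
    and "x \<in> S" "y \<in> S"
  shows "\<bar>ln (f x) - ln (f y)\<bar> \<le> L * norm (x - y)"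
proof -
  have "norm (ln (f x) - ln (f y)) \<le> L * norm (x - y)"
  proof (rule differentiable_bound[OF \<open>convex S\<close> _ _ \<open>x \<in> S\<close> \<open>y \<in> S\<close>])
    fix z assume "z \<in> S"
    have f': "(f has_derivative frechet_derivative f (at z)) (at z)"
      using diff[OF \<open>z \<in> S\<close>] frechet_derivative_works by blast
    show "((\<lambda>x. ln (f x)) has_derivative
        (\<lambda>v. frechet_derivative f (at z) v * inverse (f z))) (at z within S)"
      using has_derivative_ln[OF pos[OF \<open>z \<in> S\<close>] has_derivative_at_withinI[OF f']] .
    have "norm (frechet_derivative f (at z) v) \<le> (L * f z) * norm v" for v
    proof (rule linear_norm_le_of_unit_bound)
      show "linear (frechet_derivative f (at z))" using has_derivative_linear[OF f'] .
      show "norm (frechet_derivative f (at z) u) \<le> L * f z" if "norm u = 1" for u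
        using bound[OF \<open>z \<in> S\<close> that] pos[OF \<open>z \<in> S\<close>] by (simp add: divide_le_eq)
    qed
    then have "norm (frechet_derivative f (at z) v * inverse (f z)) \<le> L * norm v" for v
      using pos[OF \<open>z \<in> S\<close>] by (simp add: abs_mult field_simps)
    then show "onorm (\<lambda>v. frechet_derivative f (at z) v * inverse (f z)) \<le> L"
      by (rule onorm_le)
  qed
  then show ?thesis by simp
qed

lemma div_exp_le_of_log_derivative_bound:
  fixes f :: "'a::{real_normed_vector, perfect_space} \<Rightarrow> real"
  assumes pos: "\<And>x. x \<in> cball z r \<Longrightarrow> f x > 0"
    and diff: "\<And>x. x \<in> cball z r \<Longrightarrow> f differentiable (at x)"
    and bound: "\<And>x u. x \<in> cball z r \<Longrightarrow> norm u = 1 \<Longrightarrow>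
        \<bar>frechet_derivative f (at x) u\<bar> / f x \<le> L"
    and "0 \<le> L" "r * L \<le> 1" and x: "x \<in> cball z r"
  shows "f z / exp 1 \<le> f x"
proof -
  have "z \<in> cball z r" using x by (auto intro: order_trans[OF zero_le_dist])
  then have "\<bar>ln (f x) - ln (f z)\<bar> \<le> L * norm (x - z)"
    using ln_lipschitz_of_log_derivative_bound[OF convex_cball pos diff bound x] by blast
  also have "\<dots> \<le> L * r"
    using x \<open>0 \<le> L\<close> by (intro mult_left_mono) (auto simp: dist_norm norm_minus_commute)
  also have "\<dots> \<le> 1" using \<open>r * L \<le> 1\<close> by (simp add: mult.commute)
  finally have "ln (f z) - 1 \<le> ln (f x)" by linarith
  then have "exp (ln (f z) - 1) \<le> exp (ln (f x))" by simp
  then show ?thesis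
    using pos[OF x] pos[OF \<open>z \<in> cball z r\<close>] by (simp add: exp_diff)
qed

lemma measure_density_le_bound_times_measure:
  assumes "f \<in> borel_measurable M" "A \<in> sets M" "emeasure M A < \<infinity>"
    and "\<And>x. x \<in> A \<Longrightarrow> f x \<le> K" "0 \<le> K"
  shows "measure (density M (\<lambda>x. ennreal (f x))) A \<le> K * measure M A"
proof -
  have "emeasure (density M (\<lambda>x. ennreal (f x))) A = (\<integral>\<^sup>+x\<in>A. ennreal (f x) \<partial>M)"
    using assms(1,2) by (simp add: emeasure_density)
  also have "\<dots> \<le> (\<integral>\<^sup>+x. ennreal K * indicator A x \<partial>M)"
    using assms(4) by (intro nn_integral_mono) (auto simp: indicator_def intro: ennreal_leI)
  also have "\<dots> = ennreal K * emeasure M A"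
    using assms(2) by (rule nn_integral_cmult_indicator)
  also have "\<dots> = ennreal (K * measure M A)"
    using assms(3,5) by (simp add: emeasure_eq_ennreal_measure ennreal_mult)
  finally show ?thesis
    using assms(5) by (simp add: measure_def enn2real_leI)
qed

lemma uniform_ball_density_in_cball:
  fixes z :: "'a::euclidean_space"
  assumes "x \<in> cball z r"
  shows "uniform_ball_density z r x = 1 / (unit_ball_vol DIM('a) * r ^ DIM('a))"
proof -
  have "0 \<le> r" using assms by (auto intro: order_trans[OF zero_le_dist])
  with assms show ?thesis by (simp add: uniform_ball_density_def content_cball)
qed

lemma powr_neg_less_of_powr_neg_inverse_less:
  fixes c \<delta> t :: real
  assumes "0 < c" "0 < \<delta>" "\<delta> powr (-1/c) < t"
  shows "t powr (-c) < \<delta>"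
proof -
  have "t powr (-c) < (\<delta> powr (-1/c)) powr (-c)"
    using assms by (intro powr_less_mono2_neg) auto
  also have "\<dots> = \<delta>" using assms by (simp add: powr_powr)
  finally show ?thesis .
qed

theorem lemmaA1:
  fixes \<nu> :: "nat \<Rightarrow> 'a::euclidean_space measure"
    and p :: "nat \<Rightarrow> 'a \<Rightarrow> real"
    and \<theta>hat :: "nat \<Rightarrow> 'a"
    and \<delta> c :: real and N0 :: nat
  assumes dens: "\<And>n. \<nu> n = density lborel (\<lambda>x. ennreal (p n x))"
    and meas: "\<And>n. p n \<in> borel_measurable borel"
    and nonneg: "\<And>n x. p n x \<ge> 0"
    and prob: "\<And>n. prob_space (\<nu> n)"
    and \<delta>_pos: "\<delta> > 0" and c_pos: "c > 0"
    and max: "\<And>n x. n > N0 \<Longrightarrow> p n x \<le> p n (\<theta>hat n)"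
    and max_unique: "\<And>n y. n > N0 \<Longrightarrow> (\<forall>x. p n x \<le> p n y) \<Longrightarrow> y = \<theta>hat n"
    and mass: "\<And>n. n > N0 \<Longrightarrow> measure (\<nu> n) (cball (\<theta>hat n) 1) > 1/2"
    and pos: "\<And>n \<theta>. n > N0 \<Longrightarrow> \<theta> \<in> cball (\<theta>hat n) \<delta> \<Longrightarrow> p n \<theta> > 0"
    and diff: "\<And>n \<theta>. n > N0 \<Longrightarrow> \<theta> \<in> cball (\<theta>hat n) \<delta> \<Longrightarrow> p n differentiable (at \<theta>)"
    and grad: "\<And>n \<theta> v. n > N0 \<Longrightarrow> \<theta> \<in> cball (\<theta>hat n) \<delta> \<Longrightarrow> norm v = 1 \<Longrightarrow>
        \<bar>frechet_derivative (p n) (at \<theta>) v\<bar> / p n \<theta> \<le> real n powr c"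
  shows "\<forall>n. real n > max (real N0) (\<delta> powr (-1/c)) \<longrightarrow>
           (\<forall>\<theta>\<in>cball (\<theta>hat n) (real n powr (-c)).
              uniform_ball_density (\<theta>hat n) (real n powr (-c)) \<theta> / p n \<theta>
                \<le> 2 * exp 1 * real n powr (c * real DIM('a)))"
proof (intro allI impI ballI)
  fix n \<theta>
  assume n_large: "real n > max (real N0) (\<delta> powr (-1/c))"
    and \<theta>: "\<theta> \<in> cball (\<theta>hat n) (real n powr (-c))"
  define r where "r = real n powr (-c)"
  define V where "V = unit_ball_vol (real DIM('a))"
  have "n > N0" "real n > 0" using n_large by auto
  have "r < \<delta>"
    unfolding r_def using powr_neg_less_of_powr_neg_inverse_less[OF c_pos \<delta>_pos] n_large by simp
  then have ball_sub: "cball (\<theta>hat n) r \<subseteq> cball (\<theta>hat n) \<delta>" by auto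
  have "r * real n powr c = 1" using \<open>real n > 0\<close> by (simp add: r_def powr_minus)
  then have p_\<theta>: "p n (\<theta>hat n) / exp 1 \<le> p n \<theta>"
    using ball_sub \<theta> pos diff grad \<open>n > N0\<close>
    by (intro div_exp_le_of_log_derivative_bound[where r = r and L = "real n powr c"])
       (auto simp: r_def)
  have "1/2 < measure (\<nu> n) (cball (\<theta>hat n) 1)" using mass[OF \<open>n > N0\<close>] .
  also have "\<dots> \<le> p n (\<theta>hat n) * V"
    unfolding dens using meas max[OF \<open>n > N0\<close>] nonneg[of n "\<theta>hat n"]
    by (intro measure_density_le_bound_times_measure[of "p n" lborel _ "p n (\<theta>hat n)", THEN order_trans])
       (simp_all add: emeasure_cball content_cball V_def)
  finally have p_max: "1 < 2 * V * p n (\<theta>hat n)" by (simp add: mult_ac)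
  have "p n \<theta> > 0" "p n (\<theta>hat n) > 0"
    using pos \<open>n > N0\<close> ball_sub \<theta> \<delta>_pos by (auto simp: r_def)
  have "V > 0" "r > 0" using \<open>real n > 0\<close> by (simp_all add: V_def r_def)
  have r_pow: "r ^ DIM('a) = real n powr (- (c * real DIM('a)))"
    using \<open>real n > 0\<close> by (simp add: r_def powr_realpow[symmetric] powr_powr)
  have "1 / (V * r ^ DIM('a)) / p n \<theta> \<le> exp 1 / (r ^ DIM('a) * V * p n (\<theta>hat n))"
    using p_\<theta> \<open>p n \<theta> > 0\<close> \<open>p n (\<theta>hat n) > 0\<close> \<open>V > 0\<close> \<open>r > 0\<close>
    by (simp add: field_simps)
  also have "\<dots> \<le> 2 * exp 1 / r ^ DIM('a)"
    using p_max \<open>V > 0\<close> \<open>r > 0\<close> by (simp add: field_simps)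
  also have "\<dots> = 2 * exp 1 * real n powr (c * real DIM('a))"
    using r_pow by (simp add: powr_minus divide_inverse)
  finally show "uniform_ball_density (\<theta>hat n) (real n powr (-c)) \<theta> / p n \<theta>
      \<le> 2 * exp 1 * real n powr (c * real DIM('a))"
    using \<theta> by (simp add: uniform_ball_density_in_cball r_def V_def)
qed

end
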